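(* Let $X$ be a graph on vertex set $V$ with $|V|=n$, possibly with loops (but no multiple edges), with adjacency matrix $A$ and vertex degrees $d_1,\dots,d_n$ (each loop counted once in the degree). Let $T=\operatorname{diag}(t_1,\dots,t_n)$ be a real diagonal matrix such that $T+A$ is positive semidefinite. If $S\subseteq V$ is an independent set of size $s$ containing $s_1$ vertices that carry loops, then \[ \frac{s^2}{n^2}\sum_{i\in V}(t_i+d_i)\;-\;2\frac{s}{n}\sum_{i\in S}(t_i+d_i)\;+\;\sum_{i\in S}t_i\;\ge\;-s_1 . \]
   Context: The adjacency matrix $A$ has $A_{ij}=1$ if $i\ne j$ are adjacent and $0$ otherwise, and $A_{ii}=1$ if vertex $i$ carries a loop and $0$ otherwise. An independent set is a set of vertices no two distinct members of which are adjacent; vertices with loops are allowed in an independent set. *)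

theory Defs
  imports "HOL-Analysis.Analysis"
begin

text \<open>A graph with possible loops on the finite vertex type 'n, given by a symmetric
  relation E; E i i means vertex i carries a loop.\<close>

definition adj_matrix :: "('n::finite \<Rightarrow> 'n \<Rightarrow> bool) \<Rightarrow> real^'n^'n" where
  "adj_matrix E = (\<chi> i j. if E i j then 1 else 0)"

definition degree :: "('n::finite \<Rightarrow> 'n \<Rightarrow> bool) \<Rightarrow> 'n \<Rightarrow> nat" where
  "degree E i = card {j. E i j}"

definition diag_mat :: "('n::finite \<Rightarrow> real) \<Rightarrow> real^'n^'n" where
  "diag_mat t = (\<chi> i j. if i = j then t i else 0)"

definition psd :: "real^'n^'n \<Rightarrow> bool" where
  "psd M \<longleftrightarrow> (\<forall>x. 0 \<le> x \<bullet> (M *v x))"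

definition independent_set :: "('n \<Rightarrow> 'n \<Rightarrow> bool) \<Rightarrow> 'n set \<Rightarrow> bool" where
  "independent_set E S \<longleftrightarrow> (\<forall>i\<in>S. \<forall>j\<in>S. i \<noteq> j \<longrightarrow> \<not> E i j)"

end

theory Submission
  imports Defs
begin

text \<open>Test the positive semidefinite form of \<open>T + A\<close> on the vector \<open>\<one>\<^sub>S - (s/n) \<one>\<close>.
  Since \<open>T + A\<close> is symmetric, the form expands into its total entry sum, which is
  \<open>\<Sum>(t\<^sub>i + d\<^sub>i)\<close>, the row sums over \<open>S\<close>, which give \<open>\<Sum>\<^sub>S (t\<^sub>i + d\<^sub>i)\<close>, and its
  \<open>S \<times> S\<close> block sum, which by independence consists only of the diagonal entries
  \<open>t\<^sub>i\<close> and the loops in \<open>S\<close>.\<close>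

lemma inner_matrix_vector_symmetric:
  fixes M :: "real^'n^'n"
  assumes "transpose M = M"
  shows "x \<bullet> (M *v y) = y \<bullet> (M *v x)"
  by (metis assms dot_lmul_matrix inner_commute transpose_matrix_vector)

lemma psd_shift_le:
  fixes M :: "real^'n^'n"
  assumes "psd M" and "transpose M = M"
  shows "2 * c * (u \<bullet> (M *v y)) \<le> u \<bullet> (M *v u) + c\<^sup>2 * (y \<bullet> (M *v y))"
proof -
  have "0 \<le> (u - c *\<^sub>R y) \<bullet> (M *v (u - c *\<^sub>R y))"
    using \<open>psd M\<close> unfolding psd_def by blast
  also have "\<dots> = u \<bullet> (M *v u) - c * (u \<bullet> (M *v y)) - c * (y \<bullet> (M *v u))
      + c\<^sup>2 * (y \<bullet> (M *v y))"
    by (simp add: matrix_vector_mult_diff_distrib matrix_vector_mult_scaleR inner_diff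
        algebra_simps power2_eq_square)
  finally show ?thesis
    using inner_matrix_vector_symmetric[OF \<open>transpose M = M\<close>, of y u] by simp
qed

definition indicator_vec :: "'n::finite set \<Rightarrow> real^'n" where
  "indicator_vec S = (\<chi> i. if i \<in> S then 1 else 0)"

lemma inner_indicator_vec_mult:
  fixes M :: "real^'n::finite^'n"
  shows "indicator_vec S \<bullet> (M *v indicator_vec T) = (\<Sum>i\<in>S. \<Sum>j\<in>T. M $ i $ j)"
  by (simp add: indicator_vec_def inner_vec_def matrix_vector_mult_def sum.If_cases
      if_distrib[where f = "\<lambda>a. a * _"] if_distrib[where f = "\<lambda>a. _ * a"] cong: if_cong)

lemma diag_mat_row_sum: "(\<Sum>j\<in>UNIV. diag_mat t $ i $ j) = t i"
  by (simp add: diag_mat_def)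

lemma adj_matrix_row_sum: "(\<Sum>j\<in>UNIV. adj_matrix E $ i $ j) = real (degree E i)"
  by (simp add: adj_matrix_def degree_def sum.If_cases)

lemma diag_mat_block_sum: "(\<Sum>i\<in>S. \<Sum>j\<in>S. diag_mat t $ i $ j) = (\<Sum>i\<in>S. t i)"
  by (simp add: diag_mat_def sum.If_cases Int_absorb1)

lemma adj_matrix_independent_block_sum:
  assumes "independent_set E S"
  shows "(\<Sum>i\<in>S. \<Sum>j\<in>S. adj_matrix E $ i $ j) = real (card {i\<in>S. E i i})"
proof -
  have "(\<Sum>j\<in>S. adj_matrix E $ i $ j) = (if E i i then 1 else 0)" if "i \<in> S" for i
  proof -
    have "(\<Sum>j\<in>S. adj_matrix E $ i $ j) = (\<Sum>j\<in>S. if j = i \<and> E i i then 1 else 0)"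
      using assms that by (intro sum.cong) (auto simp: adj_matrix_def independent_set_def)
    then show ?thesis
      using that by (simp add: sum.If_cases Int_absorb1)
  qed
  then have "(\<Sum>i\<in>S. \<Sum>j\<in>S. adj_matrix E $ i $ j) = (\<Sum>i\<in>S. if E i i then 1 else 0)"
    by (intro sum.cong) auto
  then show ?thesis
    by (simp add: sum.If_cases Int_def conj_commute)
qed

lemma transpose_diag_mat_adj_matrix:
  assumes "\<And>i j. E i j \<longleftrightarrow> E j i"
  shows "transpose (diag_mat t + adj_matrix E) = diag_mat t + adj_matrix E"
  using assms by (simp add: transpose_def diag_mat_def adj_matrix_def vec_eq_iff)

theorem lemma2p1:
  fixes E :: "'n::finite \<Rightarrow> 'n \<Rightarrow> bool"
    and t :: "'n \<Rightarrow> real"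
    and S :: "'n set"
  assumes sym: "\<And>i j. E i j \<longleftrightarrow> E j i"
    and psd: "psd (diag_mat t + adj_matrix E)"
    and indep: "independent_set E S"
  shows "(real (card S))^2 / (real CARD('n))^2 * (\<Sum>i\<in>UNIV. t i + real (degree E i))
         - 2 * real (card S) / real CARD('n) * (\<Sum>i\<in>S. t i + real (degree E i))
         + (\<Sum>i\<in>S. t i)
         \<ge> - real (card {i\<in>S. E i i})"
proof -
  let ?M = "diag_mat t + adj_matrix E"
  define c where "c = real (card S) / real CARD('n)"
  have row_sum: "(\<Sum>j\<in>UNIV. ?M $ i $ j) = t i + real (degree E i)" for i
    by (simp add: sum.distrib diag_mat_row_sum adj_matrix_row_sum)
  have "2 * c * (indicator_vec S \<bullet> (?M *v indicator_vec UNIV))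
      \<le> indicator_vec S \<bullet> (?M *v indicator_vec S)
        + c\<^sup>2 * (indicator_vec UNIV \<bullet> (?M *v indicator_vec UNIV))"
    using psd_shift_le[OF psd transpose_diag_mat_adj_matrix[OF sym]] .
  then have "2 * c * (\<Sum>i\<in>S. t i + real (degree E i))
      \<le> (\<Sum>i\<in>S. t i) + real (card {i\<in>S. E i i}) + c\<^sup>2 * (\<Sum>i\<in>UNIV. t i + real (degree E i))"
    unfolding inner_indicator_vec_mult row_sum
    by (simp add: sum.distrib diag_mat_block_sum adj_matrix_independent_block_sum[OF indep])
  then show ?thesis
    by (simp add: c_def power_divide)
qed

end
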